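(* Let $0<m\le L$ and let the two-step momentum algorithm with constant parameters $(\alpha,\beta,\gamma)$ minimize some function $f\in\mathcal{Q}_m^L$ with linear rate $\rho<1$ (i.e. the spectral radius of the matrix $A$ associated with this $f$ is at most $\rho$). Then the convergence rate $\rho$ is achieved for all functions $f\in\mathcal{Q}_m^L$.
   Context: $\mathcal{Q}_m^L$ is the class of quadratic functions $f(x)=\tfrac12x^TQx-q^Tx$ on $\mathbb{R}^n$ with $q\in\mathbb{R}^n$, $Q=Q^T\succ0$ whose largest eigenvalue is $L$ and smallest is $m$; $x^\star$ is the minimizer. The (noiseless) two-step momentum algorithm is $x^{t+2}=x^{t+1}+\beta(x^{t+1}-x^t)-\alpha\nabla f\big(x^{t+1}+\gamma(x^{t+1}-x^t)\big)$; with $\psi^t=[(x^t-x^\star)^T,(x^{t+1}-x^\star)^T]^T$, $\psi^{t+1}=A\psi^t$, $A=\begin{bmatrix}0&I\\-\beta I+\gamma\alpha Q&(1+\beta)I-(1+\gamma)\alpha Q\end{bmatrix}$. Rate $\rho$ is achieved for $f$ when the spectral radius of the corresponding $A$ is at most $\rho$. *)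

theory Defs
  imports "Jordan_Normal_Form.Spectral_Radius"
begin

definition quad_fun :: "real mat \<Rightarrow> real vec \<Rightarrow> real vec \<Rightarrow> real" where
  "quad_fun Q q x = (1/2) * scalar_prod x (Q *\<^sub>v x) - scalar_prod q x"

definition in_QmL :: "nat \<Rightarrow> real \<Rightarrow> real \<Rightarrow> real mat \<Rightarrow> real vec \<Rightarrow> bool" where
  "in_QmL n m L Q q \<longleftrightarrow>
     Q \<in> carrier_mat n n \<and> q \<in> carrier_vec n \<and>
     transpose_mat Q = Q \<and>
     (\<forall>x \<in> carrier_vec n. x \<noteq> 0\<^sub>v n \<longrightarrow> scalar_prod x (Q *\<^sub>v x) > 0) \<and>
     eigenvalue Q L \<and> eigenvalue Q m \<and>
     (\<forall>lam. eigenvalue Q lam \<longrightarrow> m \<le> lam \<and> lam \<le> L)"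

definition momentum_matrix :: "nat \<Rightarrow> real \<Rightarrow> real \<Rightarrow> real \<Rightarrow> real mat \<Rightarrow> real mat" where
  "momentum_matrix n \<alpha> \<beta> \<gamma> Q =
     four_block_mat
       (0\<^sub>m n n) (1\<^sub>m n)
       ((- \<beta>) \<cdot>\<^sub>m 1\<^sub>m n + (\<gamma> * \<alpha>) \<cdot>\<^sub>m Q)
       ((1 + \<beta>) \<cdot>\<^sub>m 1\<^sub>m n - ((1 + \<gamma>) * \<alpha>) \<cdot>\<^sub>m Q)"

definition achieves_rate :: "nat \<Rightarrow> real \<Rightarrow> real \<Rightarrow> real \<Rightarrow> real mat \<Rightarrow> real \<Rightarrow> bool" where
  "achieves_rate n \<alpha> \<beta> \<gamma> Q \<rho> \<longleftrightarrow>
     spectral_radius (map_mat complex_of_real (momentum_matrix n \<alpha> \<beta> \<gamma> Q)) \<le> \<rho>"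

end

theory Submission
  imports Defs
begin

(* On the span of an eigenvector of Q with eigenvalue \<kappa>, the momentum matrix A acts as a
  2x2 companion matrix with trace 1 + \<beta> - (1 + \<gamma>) \<alpha> \<kappa> and determinant \<beta> - \<gamma> \<alpha> \<kappa>; since a
  real symmetric Q has only real eigenvalues, the spectrum of A is exactly the set of roots of
  these quadratics for the eigenvalues \<kappa> of Q. Both roots of \<mu>^2 - b \<mu> + c lie in the disk of
  radius \<rho> iff c \<le> \<rho>^2, \<rho> |b| \<le> \<rho>^2 + c and |b| \<le> 2 \<rho>, a convex condition on (b, c). Trace and
  determinant are affine in \<kappa>, so the condition holds on all of [m, L] as soon as it holds at
  m and L, which are eigenvalues of the given Q0. *)

definition roots_in_cball :: "real \<Rightarrow> real \<Rightarrow> real \<Rightarrow> bool" where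
  "roots_in_cball r b c \<longleftrightarrow>
     (\<forall>\<mu>. \<mu>\<^sup>2 - complex_of_real b * \<mu> + complex_of_real c = 0 \<longrightarrow> cmod \<mu> \<le> r)"

lemma quadratic_root_cmod_le:
  assumes r: "0 \<le> r" and c: "c \<le> r\<^sup>2" and rb: "r * \<bar>b\<bar> \<le> r\<^sup>2 + c" and b: "\<bar>b\<bar> \<le> 2 * r"
    and root: "\<mu>\<^sup>2 - complex_of_real b * \<mu> + complex_of_real c = 0"
  shows "cmod \<mu> \<le> r"
proof -
  obtain x y where \<mu>: "\<mu> = Complex x y" by (cases \<mu>)
  have re: "x\<^sup>2 - y\<^sup>2 - b * x + c = 0" and im: "(2 * x - b) * y = 0"
    using arg_cong[OF root, of Re] arg_cong[OF root, of Im]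
    by (simp_all add: \<mu> power2_eq_square algebra_simps)
  show ?thesis
  proof (cases "y = 0")
    case True
    have "\<bar>x\<bar> \<le> r"
    proof (rule ccontr)
      assume "\<not> \<bar>x\<bar> \<le> r"
      then have "0 < (\<bar>x\<bar> - r) * (\<bar>x\<bar> + r - \<bar>b\<bar>)"
        using b by (intro mult_pos_pos) auto
      also have "\<dots> = x\<^sup>2 - r\<^sup>2 - \<bar>b\<bar> * \<bar>x\<bar> + r * \<bar>b\<bar>"
        by (simp add: algebra_simps power2_eq_square flip: power2_abs)
      finally show False
        using re True rb abs_ge_self[of "b * x"] by (simp add: abs_mult)
    qed
    then show ?thesis using True by (simp add: \<mu> cmod_def)
  next
    case False
    with im have "b = 2 * x" by simp
    with re have "c = x\<^sup>2 + y\<^sup>2" by (simp add: power2_eq_square algebra_simps)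
    then have "(cmod \<mu>)\<^sup>2 = c" by (simp add: \<mu> cmod_power2)
    with c r show ?thesis by (auto intro: power2_le_imp_le)
  qed
qed

lemma quadratic_coeffs_bounded_if_roots_cmod_le:
  assumes roots: "\<And>\<mu>. \<mu>\<^sup>2 - complex_of_real b * \<mu> + complex_of_real c = 0 \<Longrightarrow> cmod \<mu> \<le> r"
  shows "0 \<le> r \<and> c \<le> r\<^sup>2 \<and> r * \<bar>b\<bar> \<le> r\<^sup>2 + c \<and> \<bar>b\<bar> \<le> 2 * r"
proof (cases "0 \<le> b\<^sup>2 - 4 * c")
  case True
  define s where "s = sqrt (b\<^sup>2 - 4 * c)"
  define x\<^sub>1 where "x\<^sub>1 = (b + s) / 2"
  define x\<^sub>2 where "x\<^sub>2 = (b - s) / 2"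
  have s: "s\<^sup>2 = b\<^sup>2 - 4 * c" using True by (simp add: s_def)
  have bc: "b = x\<^sub>1 + x\<^sub>2" "c = x\<^sub>1 * x\<^sub>2"
    using s by (simp_all add: x\<^sub>1_def x\<^sub>2_def field_simps power2_eq_square)
  have "cmod (complex_of_real x\<^sub>1) \<le> r" "cmod (complex_of_real x\<^sub>2) \<le> r"
    by (intro roots; simp add: bc power2_eq_square algebra_simps)+
  then have x: "\<bar>x\<^sub>1\<bar> \<le> r" "\<bar>x\<^sub>2\<bar> \<le> r" by simp_all
  have "\<bar>x\<^sub>1 * x\<^sub>2\<bar> \<le> r * r" unfolding abs_mult using x by (intro mult_mono) auto
  moreover have "0 \<le> (r - x\<^sub>1) * (r - x\<^sub>2)" "0 \<le> (r + x\<^sub>1) * (r + x\<^sub>2)" using x by simp_all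
  ultimately show ?thesis
    using x unfolding bc by (auto simp: abs_if algebra_simps power2_eq_square split: if_splits)
next
  case False
  define s where "s = sqrt (4 * c - b\<^sup>2)"
  define z where "z = Complex (b / 2) (s / 2)"
  have s: "s\<^sup>2 = 4 * c - b\<^sup>2" using False by (simp add: s_def)
  have "z\<^sup>2 - complex_of_real b * z + complex_of_real c = 0"
    using s by (simp add: z_def complex_eq_iff power2_eq_square field_simps)
  then have z: "cmod z \<le> r" by (rule roots)
  have "(cmod z)\<^sup>2 = (b\<^sup>2 + s\<^sup>2) / 4" by (simp add: z_def cmod_power2 power_divide)
  then have c: "(cmod z)\<^sup>2 = c" using s by simp
  have "b\<^sup>2 \<le> (2 * cmod z)\<^sup>2" using False by (simp add: power_mult_distrib c)
  then have b: "\<bar>b\<bar> \<le> 2 * cmod z" by (rule power2_le_imp_le[of "\<bar>b\<bar>", simplified]) simp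
  have "r * (2 * cmod z) \<le> r\<^sup>2 + (cmod z)\<^sup>2"
    using zero_le_power2[of "r - cmod z"] by (simp add: power2_diff)
  moreover have "r * \<bar>b\<bar> \<le> r * (2 * cmod z)" using b z by (simp add: mult_left_mono)
  moreover have "(cmod z)\<^sup>2 \<le> r\<^sup>2" using z by (simp add: power_mono)
  ultimately show ?thesis using c z b norm_ge_zero[of z] by linarith
qed

lemma roots_in_cball_iff:
  "roots_in_cball r b c \<longleftrightarrow> 0 \<le> r \<and> c \<le> r\<^sup>2 \<and> r * \<bar>b\<bar> \<le> r\<^sup>2 + c \<and> \<bar>b\<bar> \<le> 2 * r"
  unfolding roots_in_cball_def
  using quadratic_root_cmod_le quadratic_coeffs_bounded_if_roots_cmod_le by blast

lemma roots_in_cball_convex: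
  assumes "roots_in_cball r b\<^sub>1 c\<^sub>1" "roots_in_cball r b\<^sub>2 c\<^sub>2" and t: "0 \<le> t" "t \<le> 1"
  shows "roots_in_cball r ((1 - t) * b\<^sub>1 + t * b\<^sub>2) ((1 - t) * c\<^sub>1 + t * c\<^sub>2)"
proof -
  have r: "0 \<le> r" and c: "c\<^sub>1 \<le> r\<^sup>2" "c\<^sub>2 \<le> r\<^sup>2"
    and rb: "r * \<bar>b\<^sub>1\<bar> \<le> r\<^sup>2 + c\<^sub>1" "r * \<bar>b\<^sub>2\<bar> \<le> r\<^sup>2 + c\<^sub>2"
    and b: "\<bar>b\<^sub>1\<bar> \<le> 2 * r" "\<bar>b\<^sub>2\<bar> \<le> 2 * r"
    using assms(1,2) unfolding roots_in_cball_iff by auto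
  have t': "0 \<le> 1 - t" using t by simp
  have tri: "\<bar>(1 - t) * b\<^sub>1 + t * b\<^sub>2\<bar> \<le> (1 - t) * \<bar>b\<^sub>1\<bar> + t * \<bar>b\<^sub>2\<bar>"
    using t t' by (metis abs_mult abs_of_nonneg abs_triangle_ineq)
  have "r * \<bar>(1 - t) * b\<^sub>1 + t * b\<^sub>2\<bar> \<le> (1 - t) * (r * \<bar>b\<^sub>1\<bar>) + t * (r * \<bar>b\<^sub>2\<bar>)"
    using mult_left_mono[OF tri r] by (simp add: algebra_simps)
  moreover note mult_left_mono[OF c(1) t'] mult_left_mono[OF c(2) t(1)]
    mult_left_mono[OF rb(1) t'] mult_left_mono[OF rb(2) t(1)]
    mult_left_mono[OF b(1) t'] mult_left_mono[OF b(2) t(1)]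
  ultimately show ?thesis
    using r tri unfolding roots_in_cball_iff by (simp add: algebra_simps)
qed

definition momentum_trace :: "real \<Rightarrow> real \<Rightarrow> real \<Rightarrow> real \<Rightarrow> real" where
  "momentum_trace \<alpha> \<beta> \<gamma> \<kappa> = 1 + \<beta> - (1 + \<gamma>) * \<alpha> * \<kappa>"

definition momentum_det :: "real \<Rightarrow> real \<Rightarrow> real \<Rightarrow> real \<Rightarrow> real" where
  "momentum_det \<alpha> \<beta> \<gamma> \<kappa> = \<beta> - \<gamma> * \<alpha> * \<kappa>"

lemma roots_in_cball_momentum_between:
  assumes "roots_in_cball r (momentum_trace \<alpha> \<beta> \<gamma> m) (momentum_det \<alpha> \<beta> \<gamma> m)"
    and "roots_in_cball r (momentum_trace \<alpha> \<beta> \<gamma> L) (momentum_det \<alpha> \<beta> \<gamma> L)"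
    and "m \<le> \<kappa>" "\<kappa> \<le> L"
  shows "roots_in_cball r (momentum_trace \<alpha> \<beta> \<gamma> \<kappa>) (momentum_det \<alpha> \<beta> \<gamma> \<kappa>)"
proof (cases "m = L")
  case True
  with assms show ?thesis by simp
next
  case False
  define t where "t = (\<kappa> - m) / (L - m)"
  have t: "0 \<le> t" "t \<le> 1" using assms(3,4) False by (auto simp: t_def divide_le_eq_1)
  have "t * (L - m) = \<kappa> - m" using False by (simp add: t_def)
  then have \<kappa>: "\<kappa> = (1 - t) * m + t * L" by (simp add: algebra_simps)
  have "momentum_trace \<alpha> \<beta> \<gamma> \<kappa> = (1 - t) * momentum_trace \<alpha> \<beta> \<gamma> m + t * momentum_trace \<alpha> \<beta> \<gamma> L"
    and "momentum_det \<alpha> \<beta> \<gamma> \<kappa> = (1 - t) * momentum_det \<alpha> \<beta> \<gamma> m + t * momentum_det \<alpha> \<beta> \<gamma> L"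
    unfolding momentum_trace_def momentum_det_def \<kappa> by (simp_all add: algebra_simps)
  with roots_in_cball_convex[OF assms(1,2) t] show ?thesis by simp
qed

lemma eigenvalue_imp_dim_pos:
  assumes "A \<in> carrier_mat n n" and "eigenvalue A k"
  shows "0 < n"
proof (rule ccontr)
  assume "\<not> 0 < n"
  moreover obtain v where "eigenvector A v k" using assms(2) unfolding eigenvalue_def by blast
  ultimately show False using assms(1) unfolding eigenvector_def by (auto intro: eq_vecI)
qed

lemma spectral_radius_le_iff:
  assumes "A \<in> carrier_mat n n" and "0 < n"
  shows "spectral_radius A \<le> r \<longleftrightarrow> (\<forall>\<mu> \<in> spectrum A. cmod \<mu> \<le> r)"
  using spectral_radius_mem_max[OF assms] by force

lemma symmetric_real_mat_eigenvalue_real: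
  fixes Q :: "real mat"
  assumes Q: "Q \<in> carrier_mat n n" and sym: "transpose_mat Q = Q"
    and ev: "eigenvalue (map_mat complex_of_real Q) \<kappa>"
  shows "\<exists>k. \<kappa> = complex_of_real k \<and> eigenvalue Q k"
proof -
  define QC where "QC = map_mat complex_of_real Q"
  have QC: "QC \<in> carrier_mat n n" using Q by (simp add: QC_def)
  have "transpose_mat QC = map_mat complex_of_real (transpose_mat Q)"
    using Q by (auto simp: QC_def intro!: eq_matI)
  then have QC_sym: "transpose_mat QC = QC" by (simp add: sym QC_def)
  obtain u where u: "u \<in> carrier_vec n" "u \<noteq> 0\<^sub>v n" and Qu: "QC *\<^sub>v u = \<kappa> \<cdot>\<^sub>v u"
    using ev QC unfolding QC_def[symmetric] eigenvalue_def eigenvector_def by auto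
  have conj_Qu: "conjugate (QC *\<^sub>v u) = QC *\<^sub>v conjugate u"
    using Q u by (intro eq_vecI) (auto simp: QC_def scalar_prod_def cnj_sum)
  have "\<kappa> * (u \<bullet>c u) = (QC *\<^sub>v u) \<bullet> conjugate u"
    using u by (simp add: Qu)
  also have "\<dots> = u \<bullet> (QC *\<^sub>v conjugate u)"
    using transpose_vec_mult_scalar[OF QC, of "conjugate u" u] u by (simp add: QC_sym)
  also have "\<dots> = cnj \<kappa> * (u \<bullet>c u)"
    using u by (simp flip: conj_Qu add: Qu conjugate_smult_vec)
  finally have "\<kappa> = cnj \<kappa>" using u by simp
  then have \<kappa>: "\<kappa> = complex_of_real (Re \<kappa>)" by (simp add: complex_eq_iff)
  have "poly (char_poly QC) \<kappa> = 0" using ev QC by (simp add: QC_def eigenvalue_root_char_poly)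
  then have "poly (char_poly Q) (Re \<kappa>) = 0"
    by (subst (asm) \<kappa>) (simp add: QC_def of_real_hom.char_poly_hom[OF Q] of_real_hom.poly_map_poly)
  then show ?thesis using \<kappa> Q by (auto simp: eigenvalue_root_char_poly)
qed

lemma smult_mat_mult_vec:
  assumes "A \<in> carrier_mat nr nc" and "v \<in> carrier_vec nc"
  shows "(k \<cdot>\<^sub>m A) *\<^sub>v v = k \<cdot>\<^sub>v (A *\<^sub>v v)"
  using assms by (intro eq_vecI) (auto simp: smult_scalar_prod_distrib[of _ nc])

lemma of_real_affine_mat_mult_vec:
  fixes Q :: "real mat"
  assumes Q: "Q \<in> carrier_mat n n" and u: "u \<in> carrier_vec n"
  shows "map_mat complex_of_real (a \<cdot>\<^sub>m 1\<^sub>m n + b \<cdot>\<^sub>m Q) *\<^sub>v u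
    = complex_of_real a \<cdot>\<^sub>v u + complex_of_real b \<cdot>\<^sub>v (map_mat complex_of_real Q *\<^sub>v u)"
proof -
  have "map_mat complex_of_real (a \<cdot>\<^sub>m 1\<^sub>m n + b \<cdot>\<^sub>m Q)
      = complex_of_real a \<cdot>\<^sub>m 1\<^sub>m n + complex_of_real b \<cdot>\<^sub>m map_mat complex_of_real Q"
    using Q by (intro eq_matI) auto
  then show ?thesis
    using Q u by (simp add: add_mult_distrib_mat_vec[of _ n n] smult_mat_mult_vec[of _ n n])
qed

lemma momentum_matrix_carrier:
  "Q \<in> carrier_mat n n \<Longrightarrow> momentum_matrix n \<alpha> \<beta> \<gamma> Q \<in> carrier_mat (n + n) (n + n)"
  unfolding momentum_matrix_def by (intro four_block_carrier_mat) auto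

lemma of_real_momentum_matrix_mult_append:
  fixes Q :: "real mat"
  assumes Q: "Q \<in> carrier_mat n n" and u: "u \<in> carrier_vec n" and w: "w \<in> carrier_vec n"
  defines "QC \<equiv> map_mat complex_of_real Q"
  shows "map_mat complex_of_real (momentum_matrix n \<alpha> \<beta> \<gamma> Q) *\<^sub>v (u @\<^sub>v w)
    = w @\<^sub>v (complex_of_real (- \<beta>) \<cdot>\<^sub>v u + complex_of_real (\<gamma> * \<alpha>) \<cdot>\<^sub>v (QC *\<^sub>v u)
         + (complex_of_real (1 + \<beta>) \<cdot>\<^sub>v w + complex_of_real (- ((1 + \<gamma>) * \<alpha>)) \<cdot>\<^sub>v (QC *\<^sub>v w)))"
proof -
  define C where "C = (- \<beta>) \<cdot>\<^sub>m 1\<^sub>m n + (\<gamma> * \<alpha>) \<cdot>\<^sub>m Q"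
  define D where "D = (1 + \<beta>) \<cdot>\<^sub>m 1\<^sub>m n + (- ((1 + \<gamma>) * \<alpha>)) \<cdot>\<^sub>m Q"
  have C: "C \<in> carrier_mat n n" and D: "D \<in> carrier_mat n n" using Q by (auto simp: C_def D_def)
  have "momentum_matrix n \<alpha> \<beta> \<gamma> Q = four_block_mat (0\<^sub>m n n) (1\<^sub>m n) C D"
    using Q unfolding momentum_matrix_def C_def D_def
    by (intro arg_cong[where f = "four_block_mat _ _ _"] eq_matI) auto
  moreover have map_zero_one: "map_mat complex_of_real (0\<^sub>m n n) = 0\<^sub>m n n"
    "map_mat complex_of_real (1\<^sub>m n) = 1\<^sub>m n" by (auto intro!: eq_matI)
  ultimately have "map_mat complex_of_real (momentum_matrix n \<alpha> \<beta> \<gamma> Q)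
      = four_block_mat (0\<^sub>m n n) (1\<^sub>m n) (map_mat complex_of_real C) (map_mat complex_of_real D)"
    using C D by (simp add: map_four_block_mat[of _ n n _ n _ n] map_zero_one)
  also have "\<dots> *\<^sub>v (u @\<^sub>v w) = (0\<^sub>m n n *\<^sub>v u + 1\<^sub>m n *\<^sub>v w)
      @\<^sub>v (map_mat complex_of_real C *\<^sub>v u + map_mat complex_of_real D *\<^sub>v w)"
    using C D u w by (intro four_block_mat_mult_vec) auto
  also have "0\<^sub>m n n *\<^sub>v u + 1\<^sub>m n *\<^sub>v w = w" using u w by auto
  finally show ?thesis
    unfolding C_def D_def QC_def
    by (simp add: of_real_affine_mat_mult_vec[OF Q u] of_real_affine_mat_mult_vec[OF Q w])
qed

lemma momentum_matrix_eigen_equation: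
  fixes Q :: "real mat"
  assumes Q: "Q \<in> carrier_mat n n" and u: "u \<in> carrier_vec n" and w: "w \<in> carrier_vec n"
  defines "QC \<equiv> map_mat complex_of_real Q"
  shows "map_mat complex_of_real (momentum_matrix n \<alpha> \<beta> \<gamma> Q) *\<^sub>v (u @\<^sub>v w) = \<mu> \<cdot>\<^sub>v (u @\<^sub>v w)
    \<longleftrightarrow> w = \<mu> \<cdot>\<^sub>v u \<and>
      (complex_of_real (\<gamma> * \<alpha>) - complex_of_real ((1 + \<gamma>) * \<alpha>) * \<mu>) \<cdot>\<^sub>v (QC *\<^sub>v u)
        = (\<mu>\<^sup>2 - complex_of_real (1 + \<beta>) * \<mu> + complex_of_real \<beta>) \<cdot>\<^sub>v u"
    (is "?eigen \<longleftrightarrow> _ \<and> ?s \<cdot>\<^sub>v (QC *\<^sub>v u) = ?t \<cdot>\<^sub>v u")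
proof -
  have QC: "QC \<in> carrier_mat n n" using Q by (simp add: QC_def)
  define R where "R = complex_of_real (- \<beta>) \<cdot>\<^sub>v u + complex_of_real (\<gamma> * \<alpha>) \<cdot>\<^sub>v (QC *\<^sub>v u)
    + (complex_of_real (1 + \<beta>) \<cdot>\<^sub>v w + complex_of_real (- ((1 + \<gamma>) * \<alpha>)) \<cdot>\<^sub>v (QC *\<^sub>v w))"
  have R: "R \<in> carrier_vec n" using u w QC by (simp add: R_def)
  have smult_append: "\<mu> \<cdot>\<^sub>v (u @\<^sub>v w) = (\<mu> \<cdot>\<^sub>v u) @\<^sub>v (\<mu> \<cdot>\<^sub>v w)"
    using u w by (intro eq_vecI) auto
  have "?eigen \<longleftrightarrow> w = \<mu> \<cdot>\<^sub>v u \<and> R = \<mu> \<cdot>\<^sub>v w"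
    unfolding of_real_momentum_matrix_mult_append[OF Q u w] QC_def[symmetric] R_def[symmetric]
      smult_append
    by (intro append_vec_eq) (use u w in auto)
  also have "\<dots> \<longleftrightarrow> w = \<mu> \<cdot>\<^sub>v u \<and> ?s \<cdot>\<^sub>v (QC *\<^sub>v u) = ?t \<cdot>\<^sub>v u"
  proof (cases "w = \<mu> \<cdot>\<^sub>v u")
    case True
    then have "QC *\<^sub>v w = \<mu> \<cdot>\<^sub>v (QC *\<^sub>v u)" using QC u by (simp add: mult_mat_vec)
    then have "R $ i = \<mu> * w $ i \<longleftrightarrow> ?s * (QC *\<^sub>v u) $ i = ?t * u $ i" if "i < n" for i
      using that u QC True unfolding R_def by (auto simp: algebra_simps power2_eq_square)
    then show ?thesis using u QC w R unfolding vec_eq_iff by auto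
  qed simp
  finally show ?thesis .
qed

lemma append_vec_eq_zero_iff:
  assumes "u \<in> carrier_vec n" and "w \<in> carrier_vec m"
  shows "u @\<^sub>v w = 0\<^sub>v (n + m) \<longleftrightarrow> u = 0\<^sub>v n \<and> w = 0\<^sub>v m"
proof -
  have zero: "0\<^sub>v (n + m) = 0\<^sub>v n @\<^sub>v 0\<^sub>v m" by auto
  show ?thesis unfolding zero by (intro append_vec_eq) (use assms in auto)
qed

lemma momentum_char_root_iff:
  "\<mu>\<^sup>2 - complex_of_real (momentum_trace \<alpha> \<beta> \<gamma> \<kappa>) * \<mu> + complex_of_real (momentum_det \<alpha> \<beta> \<gamma> \<kappa>) = 0
    \<longleftrightarrow> \<mu>\<^sup>2 - complex_of_real (1 + \<beta>) * \<mu> + complex_of_real \<beta>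
      = complex_of_real \<kappa> * (complex_of_real (\<gamma> * \<alpha>) - complex_of_real ((1 + \<gamma>) * \<alpha>) * \<mu>)"
  by (simp add: momentum_trace_def momentum_det_def algebra_simps)

lemma momentum_matrix_eigenvalue_if_char_root:
  fixes Q :: "real mat"
  assumes Q: "Q \<in> carrier_mat n n" and ev: "eigenvalue Q \<kappa>"
    and root: "\<mu>\<^sup>2 - complex_of_real (momentum_trace \<alpha> \<beta> \<gamma> \<kappa>) * \<mu>
      + complex_of_real (momentum_det \<alpha> \<beta> \<gamma> \<kappa>) = 0"
  shows "\<mu> \<in> spectrum (map_mat complex_of_real (momentum_matrix n \<alpha> \<beta> \<gamma> Q))"
proof -
  define QC where "QC = map_mat complex_of_real Q"
  define A where "A = map_mat complex_of_real (momentum_matrix n \<alpha> \<beta> \<gamma> Q)"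
  have A: "A \<in> carrier_mat (n + n) (n + n)" using momentum_matrix_carrier[OF Q] by (simp add: A_def)
  obtain w where w: "eigenvector Q w \<kappa>" using ev unfolding eigenvalue_def by blast
  define u where "u = map_vec complex_of_real w"
  have "eigenvector QC u (complex_of_real \<kappa>)"
    unfolding QC_def u_def by (rule of_real_hom.eigenvector_hom[OF Q w])
  then have u: "u \<in> carrier_vec n" "u \<noteq> 0\<^sub>v n" and Qu: "QC *\<^sub>v u = complex_of_real \<kappa> \<cdot>\<^sub>v u"
    using Q unfolding eigenvector_def QC_def by auto
  have t: "\<mu>\<^sup>2 - complex_of_real (1 + \<beta>) * \<mu> + complex_of_real \<beta>
      = complex_of_real \<kappa> * (complex_of_real (\<gamma> * \<alpha>) - complex_of_real ((1 + \<gamma>) * \<alpha>) * \<mu>)"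
    using root unfolding momentum_char_root_iff .
  have "A *\<^sub>v (u @\<^sub>v (\<mu> \<cdot>\<^sub>v u)) = \<mu> \<cdot>\<^sub>v (u @\<^sub>v (\<mu> \<cdot>\<^sub>v u))"
    unfolding A_def momentum_matrix_eigen_equation[OF Q u(1) smult_carrier_vec[THEN iffD2, OF u(1)]]
      QC_def[symmetric] Qu t
    by (simp add: smult_smult_assoc mult.commute)
  moreover have "u @\<^sub>v (\<mu> \<cdot>\<^sub>v u) \<noteq> 0\<^sub>v (n + n)" using u by (simp add: append_vec_eq_zero_iff)
  ultimately show ?thesis
    using u A unfolding A_def spectrum_def eigenvalue_def eigenvector_def
    by (auto intro!: exI[of _ "u @\<^sub>v (\<mu> \<cdot>\<^sub>v u)"])
qed

lemma momentum_matrix_eigenvalue_imp_char_root: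
  fixes Q :: "real mat"
  assumes Q: "Q \<in> carrier_mat n n" and sym: "transpose_mat Q = Q"
    and spec: "\<mu> \<in> spectrum (map_mat complex_of_real (momentum_matrix n \<alpha> \<beta> \<gamma> Q))"
  shows "\<exists>\<kappa>. eigenvalue Q \<kappa> \<and>
    \<mu>\<^sup>2 - complex_of_real (momentum_trace \<alpha> \<beta> \<gamma> \<kappa>) * \<mu> + complex_of_real (momentum_det \<alpha> \<beta> \<gamma> \<kappa>) = 0"
proof -
  define QC where "QC = map_mat complex_of_real Q"
  define A where "A = map_mat complex_of_real (momentum_matrix n \<alpha> \<beta> \<gamma> Q)"
  define s where "s = complex_of_real (\<gamma> * \<alpha>) - complex_of_real ((1 + \<gamma>) * \<alpha>) * \<mu>"
  define t where "t = \<mu>\<^sup>2 - complex_of_real (1 + \<beta>) * \<mu> + complex_of_real \<beta>"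
  have QC: "QC \<in> carrier_mat n n" using Q by (simp add: QC_def)
  have A: "A \<in> carrier_mat (n + n) (n + n)" using momentum_matrix_carrier[OF Q] by (simp add: A_def)
  obtain v where "eigenvector A v \<mu>" using spec unfolding A_def spectrum_def eigenvalue_def by auto
  then have v: "v \<in> carrier_vec (n + n)" "v \<noteq> 0\<^sub>v (n + n)" and Av: "A *\<^sub>v v = \<mu> \<cdot>\<^sub>v v"
    using A unfolding eigenvector_def by auto
  define u where "u = vec_first v n"
  have u: "u \<in> carrier_vec n" by (simp add: u_def)
  have "v = u @\<^sub>v vec_last v n" using vec_first_last_append[OF v(1)] by (simp add: u_def)
  then have "vec_last v n = \<mu> \<cdot>\<^sub>v u \<and> s \<cdot>\<^sub>v (QC *\<^sub>v u) = t \<cdot>\<^sub>v u"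
    using Av momentum_matrix_eigen_equation[OF Q u vec_last_carrier[of v n],
      where \<alpha> = \<alpha> and \<beta> = \<beta> and \<gamma> = \<gamma> and \<mu> = \<mu>]
    by (simp add: A_def QC_def s_def t_def)
  then have vu: "v = u @\<^sub>v (\<mu> \<cdot>\<^sub>v u)" and su: "s \<cdot>\<^sub>v (QC *\<^sub>v u) = t \<cdot>\<^sub>v u"
    using \<open>v = u @\<^sub>v vec_last v n\<close> by auto
  have u0: "u \<noteq> 0\<^sub>v n" using v(2) u unfolding vu by (auto simp: append_vec_eq_zero_iff)
  then obtain j where j: "j < n" "u $ j \<noteq> 0"
    using u by (metis carrier_vecD eq_vecI index_zero_vec(1,2))
  have sj: "s * (QC *\<^sub>v u) $ i = t * u $ i" if "i < n" for i
    using arg_cong[OF su, of "\<lambda>x. x $ i"] that u QC by simp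
  obtain \<kappa> where \<kappa>: "eigenvalue QC \<kappa>" and t: "t = \<kappa> * s"
  proof (cases "s = 0")
    case True
    \<comment> \<open>then \<open>t = 0\<close>, so \<mu> is a root for every \<kappa> and any eigenvalue of Q will do\<close>
    then have "t = 0" using sj[OF j(1)] j(2) by simp
    moreover have "spectrum QC \<noteq> {}" using spectrum_non_empty[OF QC] j(1) by auto
    ultimately show ?thesis using True that unfolding spectrum_def by auto
  next
    case False
    then have "QC *\<^sub>v u = (t / s) \<cdot>\<^sub>v u" using sj QC u by (intro eq_vecI) (auto simp: field_simps)
    then have "eigenvalue QC (t / s)"
      using u u0 QC unfolding eigenvalue_def eigenvector_def by auto
    then show ?thesis using False that by auto
  qed
  then obtain k where "\<kappa> = complex_of_real k" "eigenvalue Q k"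
    using symmetric_real_mat_eigenvalue_real[OF Q sym] unfolding QC_def by blast
  with t show ?thesis unfolding momentum_char_root_iff s_def t_def by auto
qed

lemma spectrum_momentum_matrix:
  fixes Q :: "real mat"
  assumes "Q \<in> carrier_mat n n" and "transpose_mat Q = Q"
  shows "\<mu> \<in> spectrum (map_mat complex_of_real (momentum_matrix n \<alpha> \<beta> \<gamma> Q)) \<longleftrightarrow>
    (\<exists>\<kappa>. eigenvalue Q \<kappa> \<and>
      \<mu>\<^sup>2 - complex_of_real (momentum_trace \<alpha> \<beta> \<gamma> \<kappa>) * \<mu>
        + complex_of_real (momentum_det \<alpha> \<beta> \<gamma> \<kappa>) = 0)"
  using momentum_matrix_eigenvalue_if_char_root[OF assms(1)]
    momentum_matrix_eigenvalue_imp_char_root[OF assms] by blast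

lemma achieves_rate_iff_roots_in_cball:
  fixes Q :: "real mat"
  assumes Q: "Q \<in> carrier_mat n n" and sym: "transpose_mat Q = Q" and n: "0 < n"
  shows "achieves_rate n \<alpha> \<beta> \<gamma> Q \<rho> \<longleftrightarrow>
    (\<forall>\<kappa>. eigenvalue Q \<kappa> \<longrightarrow> roots_in_cball \<rho> (momentum_trace \<alpha> \<beta> \<gamma> \<kappa>) (momentum_det \<alpha> \<beta> \<gamma> \<kappa>))"
proof -
  have A: "map_mat complex_of_real (momentum_matrix n \<alpha> \<beta> \<gamma> Q) \<in> carrier_mat (n + n) (n + n)"
    using momentum_matrix_carrier[OF Q] by simp
  show ?thesis
    unfolding achieves_rate_def spectral_radius_le_iff[OF A add_pos_pos[OF n n]]
    by (auto simp: spectrum_momentum_matrix[OF Q sym] roots_in_cball_def)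
qed

theorem corollary1:
  fixes n :: nat and m L \<alpha> \<beta> \<gamma> \<rho> :: real and Q0 :: "real mat" and q0 :: "real vec"
  assumes "0 < m" and "m \<le> L"
    and "in_QmL n m L Q0 q0"
    and "achieves_rate n \<alpha> \<beta> \<gamma> Q0 \<rho>"
    and "\<rho> < 1"
  shows "\<forall>Q q. in_QmL n m L Q q \<longrightarrow> achieves_rate n \<alpha> \<beta> \<gamma> Q \<rho>"
proof (intro allI impI)
  fix Q q assume "in_QmL n m L Q q"
  then have Q: "Q \<in> carrier_mat n n" "transpose_mat Q = Q"
    and spec_Q: "\<And>\<kappa>. eigenvalue Q \<kappa> \<Longrightarrow> m \<le> \<kappa> \<and> \<kappa> \<le> L"
    unfolding in_QmL_def by auto
  from assms(3) have Q0: "Q0 \<in> carrier_mat n n" "transpose_mat Q0 = Q0"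
    and ev: "eigenvalue Q0 m" "eigenvalue Q0 L"
    unfolding in_QmL_def by auto
  have n: "0 < n" using eigenvalue_imp_dim_pos[OF Q0(1) ev(1)] .
  have "roots_in_cball \<rho> (momentum_trace \<alpha> \<beta> \<gamma> m) (momentum_det \<alpha> \<beta> \<gamma> m)"
    and "roots_in_cball \<rho> (momentum_trace \<alpha> \<beta> \<gamma> L) (momentum_det \<alpha> \<beta> \<gamma> L)"
    using assms(4) ev unfolding achieves_rate_iff_roots_in_cball[OF Q0 n] by blast+
  with spec_Q show "achieves_rate n \<alpha> \<beta> \<gamma> Q \<rho>"
    unfolding achieves_rate_iff_roots_in_cball[OF Q n]
    by (blast intro: roots_in_cball_momentum_between)
qed

end
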